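(* Fix reals $0<\varepsilon<1$ and $c\ge 12/\varepsilon$, and let $S$ and the squares $Q_n$ be as produced by the construction described in the context (with any choices allowed there). Call a lattice point of $Q_n$ red if it lies on a common line with two points of $S\cap Q_m$ for some $m<n$. Call an (unordered) pair of lattice points of $Q_n$ blue if at least one point of the pair is not red and the two points lie on a common line with a point of $S\cap Q_m$ for some $m<n$. Then for all sufficiently large $n$, the number of blue pairs in $Q_n$ is at most $$\frac{8\cdot 2^{3n}}{c^{4}n^{3+4\varepsilon}}.$$
   Context: Construction. Fix $0<\varepsilon<1$ and $c\ge 12/\varepsilon$. For each sufficiently large integer $n$ (say $n\ge n_0$), let $s_n=\left\lfloor\frac{2^n}{cn^{1+\varepsilon}}\right\rfloor$, $Y_n=\left\lfloor\frac{2^n}{n^{\varepsilon}}\right\rfloor$, and let $Q_n=[2^n,2^n+s_n]\times[Y_n-s_n,Y_n]$ be the axis-parallel square with side $s_n$ and top left corner $(2^n,Y_n)$. Let $p_n$ be the largest prime smaller than $s_n$. For integers $a,b$, let $\mathcal{P}_n(a,b)=\{(2^n+x,\;Y_n-y): x,y\in\{0,\dots,p_n-1\},\ y\equiv (x-a)^2+b \pmod{p_n}\}$, a translated copy of the modular parabola $y=(x-a)^2+b \bmod p_n$ in $Q_n$. The set $S\subseteq\mathbb{Z}^2$ is built iteratively for $n=n_0,n_0+1,\dots$: given the already selected points $S_{<n}=S\cap\bigcup_{m<n}Q_m$, choose parameters $(a_n,b_n)\in\{0,\dots,p_n-1\}^2$ minimizing the number of collinear triples formed by points of $\mathcal{P}_n(a_n,b_n)\cup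 S_{<n}$ that contain points of both $\mathcal{P}_n(a_n,b_n)$ and $S_{<n}$; delete from $\mathcal{P}_n=\mathcal{P}_n(a_n,b_n)$ one point of each such triple, and add the remaining points of $\mathcal{P}_n$ to $S$. Thus $S\cap Q_n\subseteq\mathcal{P}_n$. *)

theory Defs
  imports "HOL-Computational_Algebra.Primes" Complex_Main
begin

type_synonym pt = "int \<times> int"

definition coll :: "pt \<Rightarrow> pt \<Rightarrow> pt \<Rightarrow> bool" where
  "coll u v w \<longleftrightarrow>
     (fst v - fst u) * (snd w - snd u) = (fst w - fst u) * (snd v - snd u)"

definition side :: "real \<Rightarrow> real \<Rightarrow> nat \<Rightarrow> int" where
  "side \<epsilon> c n = \<lfloor>2 ^ n / (c * real n powr (1 + \<epsilon>))\<rfloor>"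

definition Ytop :: "real \<Rightarrow> nat \<Rightarrow> int" where
  "Ytop \<epsilon> n = \<lfloor>2 ^ n / real n powr \<epsilon>\<rfloor>"

definition Qsq :: "real \<Rightarrow> real \<Rightarrow> nat \<Rightarrow> pt set" where
  "Qsq \<epsilon> c n = {(x, y). 2 ^ n \<le> x \<and> x \<le> 2 ^ n + side \<epsilon> c n \<and>
                        Ytop \<epsilon> n - side \<epsilon> c n \<le> y \<and> y \<le> Ytop \<epsilon> n}"

definition pr :: "real \<Rightarrow> real \<Rightarrow> nat \<Rightarrow> int" where
  "pr \<epsilon> c n = (GREATEST p. prime p \<and> p < side \<epsilon> c n)"

definition parab :: "real \<Rightarrow> real \<Rightarrow> nat \<Rightarrow> int \<Rightarrow> int \<Rightarrow> pt set" where
  "parab \<epsilon> c n a b = {(2 ^ n + x, Ytop \<epsilon> n - y) | x y.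
      0 \<le> x \<and> x < pr \<epsilon> c n \<and> 0 \<le> y \<and> y < pr \<epsilon> c n \<and>
      y = ((x - a) ^ 2 + b) mod pr \<epsilon> c n}"

definition Sbefore :: "real \<Rightarrow> real \<Rightarrow> pt set \<Rightarrow> nat \<Rightarrow> pt set" where
  "Sbefore \<epsilon> c S n = S \<inter> (\<Union>m<n. Qsq \<epsilon> c m)"

definition mixed_triples :: "pt set \<Rightarrow> pt set \<Rightarrow> pt set set" where
  "mixed_triples P T = {t. \<exists>u v w. t = {u, v, w} \<and> card t = 3 \<and> t \<subseteq> P \<union> T \<and>
      coll u v w \<and> t \<inter> P \<noteq> {} \<and> t \<inter> T \<noteq> {}}"

definition constructed :: "real \<Rightarrow> real \<Rightarrow> nat \<Rightarrow> pt set \<Rightarrow> bool" where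
  "constructed \<epsilon> c n0 S \<longleftrightarrow>
     S \<subseteq> (\<Union>n\<in>{n0..}. Qsq \<epsilon> c n) \<and>
     (\<forall>n\<ge>n0. \<exists>a b f.
        a \<in> {0..<pr \<epsilon> c n} \<and> b \<in> {0..<pr \<epsilon> c n} \<and>
        (\<forall>a'\<in>{0..<pr \<epsilon> c n}. \<forall>b'\<in>{0..<pr \<epsilon> c n}.
           card (mixed_triples (parab \<epsilon> c n a b) (Sbefore \<epsilon> c S n))
             \<le> card (mixed_triples (parab \<epsilon> c n a' b') (Sbefore \<epsilon> c S n))) \<and>
        (\<forall>t\<in>mixed_triples (parab \<epsilon> c n a b) (Sbefore \<epsilon> c S n).
           f t \<in> t \<inter> parab \<epsilon> c n a b) \<and>
        S \<inter> Qsq \<epsilon> c n = parab \<epsilon> c n a b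
            - f ` mixed_triples (parab \<epsilon> c n a b) (Sbefore \<epsilon> c S n))"

definition red :: "real \<Rightarrow> real \<Rightarrow> pt set \<Rightarrow> nat \<Rightarrow> pt \<Rightarrow> bool" where
  "red \<epsilon> c S n q \<longleftrightarrow> q \<in> Qsq \<epsilon> c n \<and>
     (\<exists>m<n. \<exists>u\<in>S \<inter> Qsq \<epsilon> c m. \<exists>v\<in>S \<inter> Qsq \<epsilon> c m. u \<noteq> v \<and> coll q u v)"

definition blue_pairs :: "real \<Rightarrow> real \<Rightarrow> pt set \<Rightarrow> nat \<Rightarrow> pt set set" where
  "blue_pairs \<epsilon> c S n = {{u, v} | u v. u \<in> Qsq \<epsilon> c n \<and> v \<in> Qsq \<epsilon> c n \<and> u \<noteq> v \<and>
      (\<not> red \<epsilon> c S n u \<or> \<not> red \<epsilon> c S n v) \<and>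
      (\<exists>m<n. \<exists>w\<in>S \<inter> Qsq \<epsilon> c m. coll u v w)}"

end

theory Submission
  imports Defs "HOL-Analysis.Harmonic_Numbers" "HOL-Real_Asymp.Real_Asymp"
begin

text \<open>
  Every blue pair of \<open>Q\<^sub>n\<close> lies on a line through a point \<open>w\<close> of \<open>S\<close> in an earlier square.

  Seen from \<open>w\<close>, the square \<open>Q\<^sub>n\<close> is at horizontal distance at least \<open>2\<^sup>n / 4\<close>, so the lines
  through \<open>w\<close> meeting it in two points have primitive directions \<open>(a, b)\<close> with \<open>a \<le> s\<^sub>n\<close> and
  slopes in an interval of length \<open>J \<approx> 4 s\<^sub>n / 2\<^sup>n\<close>, and such a line contains at most
  \<open>s\<^sub>n / a + 1\<close> points of \<open>Q\<^sub>n\<close>. Distinct fractions with denominators at most \<open>k\<close> differ by at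
  least \<open>1 / k\<^sup>2\<close>, so for \<open>k\<^sup>2 J < 1\<close> at most one direction has \<open>a \<le> k\<close>, while for each
  \<open>a > k\<close> there are at most \<open>a J + 1\<close> directions. Summing over \<open>a\<close> bounds the pairs collinear
  with \<open>w\<close> by about \<open>2 s\<^sub>n\<^sup>3 n / 2\<^sup>n\<close>, hence the blue pairs by about \<open>4 s\<^sub>n\<^sup>4 n / 2\<^sup>n\<close>, which is
  half of the claimed bound.
\<close>

section \<open>Lattice pairs in a square collinear with the origin\<close>

definition box :: "int \<Rightarrow> int \<Rightarrow> int \<Rightarrow> pt set" where
  "box x0 y0 s = {(x, y). x0 \<le> x \<and> x \<le> x0 + s \<and> y0 \<le> y \<and> y \<le> y0 + s}"

definition collinear_pairs :: "pt set \<Rightarrow> pt \<Rightarrow> pt set set" where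
  "collinear_pairs A w = {{u, v} | u v. u \<in> A \<and> v \<in> A \<and> u \<noteq> v \<and> coll u v w}"

definition line_through_origin :: "int \<Rightarrow> int \<Rightarrow> pt set" where
  "line_through_origin a b = {(t * a, t * b) | t. True}"

text \<open>Primitive directions of lines through the origin that may contain two points of
  \<open>box x0 y0 s\<close>: the slope conditions are cross-multiplied, and \<open>a \<le> s\<close> since two lattice
  points of such a line differ by a multiple of \<open>(a, b)\<close>.\<close>
definition box_directions :: "int \<Rightarrow> int \<Rightarrow> int \<Rightarrow> (int \<times> int) set" where
  "box_directions x0 y0 s = {(a, b). coprime a b \<and> 1 \<le> a \<and> a \<le> s \<and>
     y0 * a \<le> b * (x0 + s) \<and> b * x0 \<le> (y0 + s) * a}"

lemma finite_box: "finite (box x0 y0 s)"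
proof -
  have "box x0 y0 s \<subseteq> {x0..x0 + s} \<times> {y0..y0 + s}"
    by (auto simp: box_def)
  then show ?thesis
    by (rule finite_subset) auto
qed

lemma finite_collinear_pairs: "finite A \<Longrightarrow> finite (collinear_pairs A w)"
  by (rule finite_subset[of _ "Pow A"]) (auto simp: collinear_pairs_def)

lemma finite_box_directions:
  assumes "x0 > 0" "y0 \<ge> 0"
  shows "finite (box_directions x0 y0 s)"
proof -
  have "box_directions x0 y0 s \<subseteq> {1..s} \<times> {0..(y0 + s) * s}"
  proof
    fix d assume "d \<in> box_directions x0 y0 s"
    then obtain a b where d: "d = (a, b)" "1 \<le> a" "a \<le> s"
      and lower: "y0 * a \<le> b * (x0 + s)" and upper: "b * x0 \<le> (y0 + s) * a"
      by (auto simp: box_directions_def)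
    have "0 \<le> b * (x0 + s)"
      using lower assms d by (smt (verit) mult_nonneg_nonneg)
    then have "b \<ge> 0"
      using assms d by (simp add: zero_le_mult_iff)
    have "b \<le> b * x0"
      using \<open>b \<ge> 0\<close> assms by (simp add: mult_le_cancel_left1)
    also have "\<dots> \<le> (y0 + s) * s"
      using upper d assms by (smt (verit) mult_left_mono)
    finally show "d \<in> {1..s} \<times> {0..(y0 + s) * s}"
      using d \<open>b \<ge> 0\<close> by auto
  qed
  then show ?thesis
    by (rule finite_subset) auto
qed

lemma collinear_with_origin_primitive:
  fixes ux uy vx vy :: int
  assumes "ux > 0" "coll (ux, uy) (vx, vy) (0, 0)"
  obtains a b g t
  where "coprime a b" "1 \<le> a" "0 < g" "ux = g * a" "uy = g * b" "vx = t * a" "vy = t * b"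
proof -
  define g where "g = gcd ux uy"
  define a where "a = ux div g"
  define b where "b = uy div g"
  have "g > 0"
    using assms by (simp add: g_def)
  have u_eq: "ux = g * a" "uy = g * b"
    by (simp_all add: a_def b_def g_def)
  have "coprime a b"
    unfolding a_def b_def g_def using assms by (intro div_gcd_coprime) auto
  have "a \<ge> 1"
    using u_eq \<open>g > 0\<close> assms by (smt (verit) mult_le_0_iff)
  have "vx * b = a * vy"
    using assms(2) u_eq \<open>g > 0\<close> by (simp add: coll_def algebra_simps)
  then have "a dvd vx"
    using \<open>coprime a b\<close> by (metis coprime_dvd_mult_left_iff dvd_triv_left)
  then obtain t where "vx = t * a" "vy = t * b"
    using \<open>vx * b = a * vy\<close> \<open>a \<ge> 1\<close> by (auto simp: algebra_simps)
  then show thesis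
    using that \<open>coprime a b\<close> \<open>a \<ge> 1\<close> \<open>g > 0\<close> u_eq by blast
qed

lemma collinear_pair_on_box_direction:
  assumes "x0 > 0" "y0 \<ge> 0" and "B \<in> collinear_pairs (box x0 y0 s) (0, 0)"
  shows "\<exists>(a, b) \<in> box_directions x0 y0 s.
           B \<subseteq> line_through_origin a b \<inter> box x0 y0 s \<and> card B = 2"
proof -
  obtain ux uy vx vy where B: "B = {(ux, uy), (vx, vy)}" and "(ux, uy) \<noteq> (vx, vy)"
    and u: "(ux, uy) \<in> box x0 y0 s" and v: "(vx, vy) \<in> box x0 y0 s"
    and "coll (ux, uy) (vx, vy) (0, 0)"
    using assms(3) unfolding collinear_pairs_def by auto
  from u v have ux: "x0 \<le> ux" "ux \<le> x0 + s" and uy: "y0 \<le> uy" "uy \<le> y0 + s"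
    and vx: "x0 \<le> vx" "vx \<le> x0 + s"
    by (auto simp: box_def)
  have "ux > 0"
    using assms(1) ux by simp
  then obtain a b g t where "coprime a b" "1 \<le> a" "0 < g"
    and u_eq: "ux = g * a" "uy = g * b" and v_eq: "vx = t * a" "vy = t * b"
    using \<open>coll _ _ _\<close> by (rule collinear_with_origin_primitive)
  have "g \<noteq> t"
    using \<open>(ux, uy) \<noteq> (vx, vy)\<close> u_eq v_eq by auto
  then have "a \<le> \<bar>g - t\<bar> * a"
    using \<open>a \<ge> 1\<close> by (simp add: mult_le_cancel_right1)
  also have "\<dots> = \<bar>ux - vx\<bar>"
  proof -
    have "ux - vx = (g - t) * a"
      using u_eq v_eq by (simp add: algebra_simps)
    then show ?thesis
      using \<open>a \<ge> 1\<close> by (simp add: abs_mult)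
  qed
  also have "\<dots> \<le> s"
    using ux vx by linarith
  finally have "a \<le> s" .
  have "g * (y0 * a) \<le> g * (b * (x0 + s))"
    using mult_mono[of y0 uy ux "x0 + s"] ux uy assms u_eq by (simp add: algebra_simps)
  moreover have "g * (b * x0) \<le> g * ((y0 + s) * a)"
    using mult_mono[of uy "y0 + s" x0 ux] ux uy assms u_eq by (simp add: algebra_simps)
  ultimately have "(a, b) \<in> box_directions x0 y0 s"
    using \<open>g > 0\<close> \<open>coprime a b\<close> \<open>a \<ge> 1\<close> \<open>a \<le> s\<close> by (simp add: box_directions_def)
  moreover have "B \<subseteq> line_through_origin a b \<inter> box x0 y0 s"
    using B u v u_eq v_eq by (auto simp: line_through_origin_def ac_simps)
  moreover have "card B = 2"
    using B \<open>(ux, uy) \<noteq> (vx, vy)\<close> by simp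
  ultimately show ?thesis
    by blast
qed

lemma card_int_set_le_interval_length:
  fixes A :: "int set" and lo hi :: real
  assumes "\<And>t. t \<in> A \<Longrightarrow> lo \<le> t \<and> t \<le> hi" "lo \<le> hi + 1"
  shows "real (card A) \<le> hi - lo + 1"
proof -
  have "A \<subseteq> {\<lceil>lo\<rceil>..\<lfloor>hi\<rfloor>}"
    using assms(1) by (auto simp: ceiling_le_iff le_floor_iff)
  then have "card A \<le> nat (\<lfloor>hi\<rfloor> - \<lceil>lo\<rceil> + 1)"
    using card_mono[of "{\<lceil>lo\<rceil>..\<lfloor>hi\<rfloor>}" A] by simp
  then have "real (card A) \<le> max 0 (of_int (\<lfloor>hi\<rfloor> - \<lceil>lo\<rceil> + 1))"
    by linarith
  also have "\<dots> \<le> hi - lo + 1"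
    using of_int_floor_le[of hi] le_of_int_ceiling[of lo] assms(2) by linarith
  finally show ?thesis .
qed

lemma card_line_inter_box_le:
  assumes "a \<ge> 1" "s \<ge> 0"
  shows "real (card (line_through_origin a b \<inter> box x0 y0 s)) \<le> s / a + 1"
proof -
  define T where "T = {t. (t * a, t * b) \<in> box x0 y0 s}"
  have "a > 0"
    using assms by simp
  have "line_through_origin a b \<inter> box x0 y0 s = (\<lambda>t. (t * a, t * b)) ` T"
    by (auto simp: line_through_origin_def box_def T_def)
  moreover have "inj_on (\<lambda>t. (t * a, t * b)) T"
    using \<open>a > 0\<close> by (auto intro: inj_onI)
  ultimately have "card (line_through_origin a b \<inter> box x0 y0 s) = card T"
    by (simp add: card_image)
  also have "real (card T) \<le> (x0 + s) / a - x0 / a + 1"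
  proof (rule card_int_set_le_interval_length)
    fix t assume "t \<in> T"
    then have "real_of_int x0 \<le> t * a" "real_of_int t * a \<le> x0 + s"
      unfolding T_def box_def
      by (simp_all only: mem_Collect_eq prod.case of_int_le_iff flip: of_int_mult of_int_add)
    then show "x0 / a \<le> t \<and> t \<le> (x0 + s) / a"
      using \<open>a > 0\<close> by (simp add: pos_divide_le_eq pos_le_divide_eq del: of_int_add)
  qed (use \<open>a > 0\<close> assms in \<open>simp add: divide_right_mono add_increasing2\<close>)
  also have "\<dots> = s / a + 1"
    by (simp add: diff_divide_distrib[symmetric])
  finally show ?thesis .
qed

definition line_pairs :: "real \<Rightarrow> real \<Rightarrow> real" where
  "line_pairs s a = (s / a + 1) * (s / a) / 2"

lemma line_pairs_nonneg: "0 \<le> s \<Longrightarrow> 0 \<le> a \<Longrightarrow> 0 \<le> line_pairs s a"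
  by (simp add: line_pairs_def)

lemma line_pairs_antimono:
  assumes "0 \<le> s" "0 < a" "a \<le> a'"
  shows "line_pairs s a' \<le> line_pairs s a"
proof -
  have "s / a' \<le> s / a"
    using assms by (intro divide_left_mono) auto
  then show ?thesis
    unfolding line_pairs_def using assms by (intro divide_right_mono mult_mono) auto
qed

lemma real_choose_two: "real (n choose 2) = real n * (real n - 1) / 2"
proof (induction n)
  case (Suc n)
  have "Suc n choose 2 = n + (n choose 2)"
    using binomial_Suc_Suc[of n 1] by (simp add: numeral_2_eq_2)
  with Suc show ?case
    by (simp add: algebra_simps)
qed simp

lemma card_doubletons_le:
  assumes "finite A" "real (card A) \<le> x + 1" "0 \<le> x"
  shows "real (card {B. B \<subseteq> A \<and> card B = 2}) \<le> (x + 1) * x / 2"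
proof -
  have "real (card {B. B \<subseteq> A \<and> card B = 2}) = real (card A) * (real (card A) - 1) / 2"
    using assms(1) by (simp add: n_subsets real_choose_two)
  also have "\<dots> \<le> (x + 1) * x / 2"
  proof (cases "card A = 0")
    case False
    then show ?thesis
      using assms(2,3) by (intro divide_right_mono mult_mono) auto
  qed (use assms in simp)
  finally show ?thesis .
qed

lemma card_collinear_pairs_le_sum_directions:
  assumes "x0 > 0" "y0 \<ge> 0" "s \<ge> 0"
  shows "real (card (collinear_pairs (box x0 y0 s) (0, 0)))
           \<le> (\<Sum>(a, b) \<in> box_directions x0 y0 s. line_pairs s a)"
proof -
  let ?D = "box_directions x0 y0 s"
  define P where
    "P = (\<lambda>(a, b). {B. B \<subseteq> line_through_origin a b \<inter> box x0 y0 s \<and> card B = 2})"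
  have fin: "finite ?D" "\<And>d. finite (P d)"
    using assms finite_box_directions by (auto simp: P_def finite_box)
  have "collinear_pairs (box x0 y0 s) (0, 0) \<subseteq> (\<Union>d \<in> ?D. P d)"
    using collinear_pair_on_box_direction[OF assms(1,2)] by (fastforce simp: P_def)
  then have "card (collinear_pairs (box x0 y0 s) (0, 0)) \<le> card (\<Union>d \<in> ?D. P d)"
    using fin by (intro card_mono) auto
  also have "\<dots> \<le> (\<Sum>d \<in> ?D. card (P d))"
    by (rule card_UN_le[OF fin(1)])
  finally have "real (card (collinear_pairs (box x0 y0 s) (0, 0))) \<le> (\<Sum>d \<in> ?D. real (card (P d)))"
    by (simp flip: of_nat_sum)
  also have "\<dots> \<le> (\<Sum>(a, b) \<in> ?D. line_pairs s a)"
  proof (intro sum_mono, clarify)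
    fix a b assume "(a, b) \<in> ?D"
    then have "a \<ge> 1"
      by (simp add: box_directions_def)
    then show "real (card (P (a, b))) \<le> line_pairs s a"
      unfolding P_def line_pairs_def prod.case using assms
      by (intro card_doubletons_le card_line_inter_box_le) (auto simp: finite_box)
  qed
  finally show ?thesis .
qed

lemma box_direction_slope:
  assumes "(a, b) \<in> box_directions x0 y0 s" "x0 > 0" "s \<ge> 0"
  shows "y0 / (x0 + s) \<le> b / a" "b / a \<le> (y0 + s) / x0"
proof -
  from assms(1) have "a > 0" and "y0 * a \<le> b * (x0 + s)" "b * x0 \<le> (y0 + s) * a"
    by (auto simp: box_directions_def)
  then have "real_of_int y0 * a \<le> b * (x0 + s)" "real_of_int b * x0 \<le> (y0 + s) * a"
    by (simp_all only: of_int_le_iff flip: of_int_mult of_int_add)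
  then show "y0 / (x0 + s) \<le> b / a" "b / a \<le> (y0 + s) / x0"
    using assms \<open>a > 0\<close> by (simp_all add: field_simps)
qed

lemma box_direction_denominator_ge:
  assumes "(a, b) \<in> box_directions x0 y0 s" "x0 > 0" "y0 > 0" "s \<ge> 0"
  shows "x0 / (y0 + s) \<le> a"
proof -
  from assms(1) have "a \<ge> 1" and lower: "y0 * a \<le> b * (x0 + s)" and upper: "b * x0 \<le> (y0 + s) * a"
    by (auto simp: box_directions_def)
  have "0 < b * (x0 + s)"
    using lower assms \<open>a \<ge> 1\<close> by (smt (verit) mult_pos_pos)
  then have "b \<ge> 1"
    using assms by (simp add: zero_less_mult_iff)
  then have "x0 \<le> (y0 + s) * a"
    using upper assms by (smt (verit) mult_le_cancel_right1)
  then have "real_of_int x0 \<le> (y0 + s) * a"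
    by (simp only: of_int_le_iff flip: of_int_mult of_int_add)
  then show ?thesis
    using assms by (simp add: divide_le_eq mult.commute)
qed

lemma box_slopes_ordered:
  fixes x0 y0 s :: int
  assumes "x0 > 0" "y0 \<ge> 0" "s \<ge> 0"
  shows "real_of_int y0 / (x0 + s) \<le> (y0 + s) / x0"
proof -
  have "real_of_int y0 / (x0 + s) \<le> y0 / x0"
    using assms by (intro divide_left_mono) auto
  also have "\<dots> \<le> (y0 + s) / x0"
    using assms by (intro divide_right_mono) auto
  finally show ?thesis .
qed

lemma slope_range_le:
  fixes x y s X \<sigma> T :: real
  assumes "0 < X" "X \<le> x" "0 \<le> y" "0 \<le> s" "s \<le> \<sigma>" "y + s \<le> T"
  shows "(y + s) / x - y / (x + s) \<le> \<sigma> / X * (1 + T / X)"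
proof -
  have "(y + s) / x - y / (x + s) = s * (x + y + s) / (x * (x + s))"
    using assms by (simp add: field_simps)
  also have "\<dots> \<le> s * (x + y + s) / (x * x)"
    using assms by (intro divide_left_mono mult_left_mono mult_pos_pos) auto
  also have "\<dots> = s / x * (1 + (y + s) / x)"
    using assms by (simp add: field_simps)
  also have "\<dots> \<le> \<sigma> / X * (1 + T / X)"
    using assms by (intro mult_mono frac_le add_left_mono) auto
  finally show ?thesis .
qed

lemma card_box_directions_with_denominator_le:
  assumes "x0 > 0" "y0 \<ge> 0" "s \<ge> 0" "a \<ge> 1"
  shows "real (card {b. (a, b) \<in> box_directions x0 y0 s})
           \<le> a * ((y0 + s) / x0 - y0 / (x0 + s)) + 1"
proof -
  have "real (card {b. (a, b) \<in> box_directions x0 y0 s})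
      \<le> (y0 + s) / x0 * a - y0 / (x0 + s) * a + 1"
  proof (rule card_int_set_le_interval_length)
    fix b assume "b \<in> {b. (a, b) \<in> box_directions x0 y0 s}"
    then show "y0 / (x0 + s) * a \<le> b \<and> b \<le> (y0 + s) / x0 * a"
      using box_direction_slope[of a b x0 y0 s] assms by (simp add: field_simps)
  next
    have "y0 / (x0 + s) * a \<le> (y0 + s) / x0 * real_of_int a"
      using box_slopes_ordered[OF assms(1-3)] assms by (intro mult_right_mono) auto
    then show "y0 / (x0 + s) * a \<le> (y0 + s) / x0 * a + 1"
      by linarith
  qed
  then show ?thesis
    by (simp add: algebra_simps)
qed

lemma coprime_fractions_close_eq:
  fixes a b a' b' k :: int
  assumes "coprime a b" "coprime a' b'" "1 \<le> a" "a \<le> k" "1 \<le> a'" "a' \<le> k"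
    and close: "k\<^sup>2 * \<bar>b / a - b' / a'\<bar> < 1"
  shows "a = a' \<and> b = b'"
proof -
  have "b * a' = b' * a"
  proof (rule ccontr)
    assume "b * a' \<noteq> b' * a"
    then have "1 \<le> \<bar>real_of_int (b * a' - b' * a)\<bar>"
      by linarith
    have pos: "0 < real_of_int a * a'"
      using assms by simp
    have "real_of_int a * a' \<le> k\<^sup>2"
      using assms by (simp add: power2_eq_square mult_mono)
    also have "\<dots> \<le> k\<^sup>2 * \<bar>real_of_int (b * a' - b' * a)\<bar>"
      using \<open>1 \<le> \<bar>_\<bar>\<close> by (simp add: mult_le_cancel_left1)
    also have "\<bar>real_of_int (b * a' - b' * a)\<bar> = \<bar>b / a - b' / a'\<bar> * (real_of_int a * a')"
    proof -
      have "(b / a - b' / a') * (real_of_int a * a') = real_of_int (b * a' - b' * a)"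
        using assms(3,5) by (simp add: field_simps)
      then show ?thesis
        using pos by (metis abs_mult abs_of_pos)
    qed
    also have "k\<^sup>2 * (\<bar>b / a - b' / a'\<bar> * (real_of_int a * a')) < 1 * (real_of_int a * a')"
      using mult_strict_right_mono[OF close pos] by (simp only: mult.assoc)
    finally show False
      by simp
  qed
  then have "a dvd a'" "a' dvd a"
    using assms(1,2) by (metis coprime_dvd_mult_right_iff dvd_triv_right)+
  then have "a = a'"
    using assms by (simp add: zdvd_antisym_nonneg)
  then show ?thesis
    using \<open>b * a' = b' * a\<close> assms by simp
qed

lemma sum_int_inverse_eq_harm: "(\<Sum>a \<in> {1..s}. 1 / real_of_int a) = harm (nat s)"
proof -
  have "{1..s} = int ` {1..nat s}"
    by (cases "s \<ge> 0") (auto simp: image_int_atLeastAtMost)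
  then show ?thesis
    by (simp add: harm_def sum.reindex divide_inverse)
qed

lemma harm_le_one_plus_ln: "1 \<le> N \<Longrightarrow> harm N \<le> 1 + ln (real N)"
  using euler_mascheroni_sequence_decreasing[of 1 N] by (simp add: harm_def)

lemma sum_inverse_squares_tail_le:
  fixes k s :: int
  assumes "1 \<le> k"
  shows "(\<Sum>a \<in> {k+1..s}. 1 / (real_of_int a)\<^sup>2) \<le> 1 / k"
proof -
  have telescope: "(\<Sum>a \<in> {k+1..t}. 1 / (real_of_int a)\<^sup>2) \<le> 1 / k - 1 / t" if "k \<le> t" for t
    using that
  proof (induction t rule: int_ge_induct)
    case (step t)
    define x where "x = real_of_int t"
    have "x \<ge> 1"
      using step assms by (simp add: x_def)
    then have "1 / (x + 1)\<^sup>2 \<le> 1 / (x * (x + 1))"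
      by (intro divide_left_mono) (simp_all add: power2_eq_square)
    also have "\<dots> = 1 / x - 1 / (x + 1)"
      using \<open>x \<ge> 1\<close> by (simp add: field_simps)
    finally have "1 / (real_of_int t + 1)\<^sup>2 \<le> 1 / t - 1 / (t + 1)"
      by (simp add: x_def)
    moreover have "{k+1..t+1} = insert (t + 1) {k+1..t}"
      using step by auto
    ultimately show ?case
      using step.IH by simp
  qed simp
  show ?thesis
  proof (cases "k \<le> s")
    case True
    then have "0 \<le> 1 / real_of_int s"
      using assms by simp
    then show ?thesis
      using telescope[OF True] by linarith
  qed (use assms in simp)
qed

lemma sum_large_denominators_le:
  fixes k s :: int and J :: real
  assumes "1 \<le> k" "0 \<le> s" "0 \<le> J"
  shows "(\<Sum>a \<in> {k+1..s}. (a * J + 1) * line_pairs s a)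
           \<le> (J * s\<^sup>2 * (harm (nat s) + 1) + s\<^sup>2 / k + s * harm (nat s)) / 2"
proof -
  let ?A = "{k+1..s}" and ?H = "harm (nat s) :: real"
  have harmonic: "(\<Sum>a \<in> ?A. 1 / real_of_int a) \<le> ?H"
    unfolding sum_int_inverse_eq_harm[symmetric] using assms by (intro sum_mono2) auto
  have count: "(\<Sum>a \<in> ?A. J * s) \<le> J * s\<^sup>2"
  proof -
    have "real (card ?A) \<le> s"
      using assms by simp
    from mult_right_mono[OF this, of "J * s"] show ?thesis
      using assms by (simp add: power2_eq_square ac_simps)
  qed
  have "(\<Sum>a \<in> ?A. (a * J + 1) * line_pairs s a)
      = (\<Sum>a \<in> ?A. (J * s\<^sup>2 * (1 / a) + J * s + s\<^sup>2 * (1 / (real_of_int a)\<^sup>2) + s * (1 / a)) / 2)"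
    using assms by (intro sum.cong) (auto simp: line_pairs_def field_simps power2_eq_square)
  also have "\<dots> = (J * s\<^sup>2 * (\<Sum>a \<in> ?A. 1 / a) + (\<Sum>a \<in> ?A. J * s)
      + s\<^sup>2 * (\<Sum>a \<in> ?A. 1 / (real_of_int a)\<^sup>2) + s * (\<Sum>a \<in> ?A. 1 / a)) / 2"
    by (simp add: sum.distrib sum_distrib_left flip: sum_divide_distrib)
  also have "\<dots> \<le> (J * s\<^sup>2 * ?H + J * s\<^sup>2 + s\<^sup>2 * (1 / k) + s * ?H) / 2"
    using assms harmonic count sum_inverse_squares_tail_le[OF assms(1), of s]
    by (intro divide_right_mono add_mono mult_left_mono) auto
  finally show ?thesis
    by (simp add: algebra_simps)
qed

lemma small_box_direction_unique:
  fixes x0 y0 s k a b a' b' :: int and J :: real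
  assumes "x0 > 0" "s \<ge> 0"
    and slope_range: "(y0 + s) / x0 - y0 / (x0 + s) \<le> J" and "k\<^sup>2 * J < 1"
    and "(a, b) \<in> box_directions x0 y0 s" "(a', b') \<in> box_directions x0 y0 s" "a \<le> k" "a' \<le> k"
  shows "(a, b) = (a', b')"
proof -
  have "\<bar>b / a - b' / a'\<bar> \<le> J"
    using box_direction_slope[of a b x0 y0 s] box_direction_slope[of a' b' x0 y0 s]
      assms by (simp add: abs_le_iff)
  then have "k\<^sup>2 * \<bar>b / a - b' / a'\<bar> \<le> k\<^sup>2 * J"
    by (intro mult_left_mono) auto
  then have "k\<^sup>2 * \<bar>b / a - b' / a'\<bar> < 1"
    using \<open>k\<^sup>2 * J < 1\<close> by linarith
  then show ?thesis
    using coprime_fractions_close_eq[of a b a' b' k] assms by (simp add: box_directions_def)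
qed

lemma sum_small_box_directions_le:
  fixes x0 y0 s k :: int and J \<alpha> :: real
  assumes "x0 > 0" "y0 > 0" "s \<ge> 0"
    and slope_range: "(y0 + s) / x0 - y0 / (x0 + s) \<le> J" and "k\<^sup>2 * J < 1"
    and "0 < \<alpha>" "\<alpha> \<le> x0 / (y0 + s)"
  shows "(\<Sum>(a, b) \<in> box_directions x0 y0 s \<inter> {d. fst d \<le> k}. line_pairs s a) \<le> line_pairs s \<alpha>"
proof -
  let ?small = "box_directions x0 y0 s \<inter> {d. fst d \<le> k}"
  show ?thesis
  proof (cases "?small = {}")
    case False
    then obtain d where "d \<in> ?small"
      by auto
    moreover obtain a b where "d = (a, b)"
      by fastforce
    ultimately have ab: "(a, b) \<in> ?small"
      by simp
    have "?small = {(a, b)}"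
    proof
      show "?small \<subseteq> {(a, b)}"
      proof
        fix d' assume "d' \<in> ?small"
        moreover obtain a' b' where "d' = (a', b')"
          by fastforce
        ultimately show "d' \<in> {(a, b)}"
          using small_box_direction_unique[of x0 s y0 J k a' b' a b] ab assms by simp
      qed
    qed (use ab in simp)
    moreover have "\<alpha> \<le> a"
      using ab box_direction_denominator_ge[of a b x0 y0 s] assms by auto
    ultimately show ?thesis
      using assms by (simp add: line_pairs_antimono)
  qed (use assms in \<open>simp add: line_pairs_nonneg\<close>)
qed

lemma sum_large_box_directions_le:
  fixes x0 y0 s k :: int and J :: real
  assumes "x0 > 0" "y0 \<ge> 0" "s \<ge> 0" "k \<ge> 1"
    and slope_range: "(y0 + s) / x0 - y0 / (x0 + s) \<le> J"
  shows "(\<Sum>(a, b) \<in> box_directions x0 y0 s - {d. fst d \<le> k}. line_pairs s a)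
           \<le> (J * s\<^sup>2 * (harm (nat s) + 1) + s\<^sup>2 / k + s * harm (nat s)) / 2"
proof -
  let ?D = "box_directions x0 y0 s"
  define B where "B a = {b. (a, b) \<in> ?D}" for a
  have "J \<ge> 0"
    using slope_range box_slopes_ordered[of x0 y0 s] assms by simp
  have "?D - {d. fst d \<le> k} = Sigma {k+1..s} B"
    by (auto simp: B_def box_directions_def)
  moreover have "finite (B a)" for a
  proof (rule finite_subset)
    show "B a \<subseteq> snd ` ?D"
      by (force simp: B_def)
  qed (use assms finite_box_directions in simp)
  ultimately have "(\<Sum>(a, b) \<in> ?D - {d. fst d \<le> k}. line_pairs s a)
      = (\<Sum>a \<in> {k+1..s}. \<Sum>b \<in> B a. line_pairs s a)"
    by (subst sum.Sigma) auto
  also have "\<dots> = (\<Sum>a \<in> {k+1..s}. real (card (B a)) * line_pairs s a)"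
    by simp
  also have "\<dots> \<le> (\<Sum>a \<in> {k+1..s}. (a * J + 1) * line_pairs s a)"
  proof (intro sum_mono mult_right_mono)
    fix a assume "a \<in> {k+1..s}"
    then have "a \<ge> 1"
      using assms by simp
    have "a * ((y0 + s) / x0 - y0 / (x0 + s)) \<le> a * J"
      using slope_range \<open>a \<ge> 1\<close> by (intro mult_left_mono) auto
    then show "real (card (B a)) \<le> a * J + 1"
      using card_box_directions_with_denominator_le[of x0 y0 s a] assms \<open>a \<ge> 1\<close>
      unfolding B_def of_int_add by linarith
    show "0 \<le> line_pairs s a"
      using \<open>a \<ge> 1\<close> assms by (simp add: line_pairs_nonneg)
  qed
  also have "\<dots> \<le> (J * s\<^sup>2 * (harm (nat s) + 1) + s\<^sup>2 / k + s * harm (nat s)) / 2"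
    using assms \<open>J \<ge> 0\<close> by (intro sum_large_denominators_le)
  finally show ?thesis .
qed

lemma card_collinear_pairs_box_le:
  fixes x0 y0 s k :: int and J \<alpha> :: real
  assumes "x0 > 0" "y0 > 0" "s \<ge> 0" "k \<ge> 1"
    and "(y0 + s) / x0 - y0 / (x0 + s) \<le> J" "k\<^sup>2 * J < 1"
    and "0 < \<alpha>" "\<alpha> \<le> x0 / (y0 + s)"
  shows "real (card (collinear_pairs (box x0 y0 s) (0, 0)))
           \<le> line_pairs s \<alpha> + (J * s\<^sup>2 * (harm (nat s) + 1) + s\<^sup>2 / k + s * harm (nat s)) / 2"
proof -
  let ?D = "box_directions x0 y0 s"
  have "real (card (collinear_pairs (box x0 y0 s) (0, 0))) \<le> (\<Sum>(a, b) \<in> ?D. line_pairs s a)"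
    using assms by (intro card_collinear_pairs_le_sum_directions) auto
  also have "\<dots> = (\<Sum>(a, b) \<in> ?D \<inter> {d. fst d \<le> k}. line_pairs s a)
      + (\<Sum>(a, b) \<in> ?D - {d. fst d \<le> k}. line_pairs s a)"
    using assms finite_box_directions by (simp add: sum.Int_Diff[symmetric])
  also have "\<dots> \<le> line_pairs s \<alpha> + (J * s\<^sup>2 * (harm (nat s) + 1) + s\<^sup>2 / k + s * harm (nat s)) / 2"
    using assms by (intro add_mono sum_small_box_directions_le sum_large_box_directions_le) auto
  finally show ?thesis .
qed

lemma pair_estimate_mono:
  fixes s \<sigma> \<alpha> J H H' k q :: real
  assumes "0 \<le> s" "s \<le> \<sigma>" "0 < \<alpha>" "0 \<le> J" "0 \<le> H" "H \<le> H'" "0 < q" "q \<le> k"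
  shows "line_pairs s \<alpha> + (J * s\<^sup>2 * (H + 1) + s\<^sup>2 / k + s * H) / 2
           \<le> line_pairs \<sigma> \<alpha> + (J * \<sigma>\<^sup>2 * (H' + 1) + \<sigma>\<^sup>2 / q + \<sigma> * H') / 2"
proof -
  have "s\<^sup>2 \<le> \<sigma>\<^sup>2"
    using assms by (intro power_mono) auto
  have "line_pairs s \<alpha> \<le> line_pairs \<sigma> \<alpha>"
    unfolding line_pairs_def using assms by (intro divide_right_mono mult_mono add_right_mono) auto
  moreover have "J * s\<^sup>2 * (H + 1) \<le> J * \<sigma>\<^sup>2 * (H' + 1)"
    using assms \<open>s\<^sup>2 \<le> \<sigma>\<^sup>2\<close> by (intro mult_mono) auto
  moreover have "s\<^sup>2 / k \<le> \<sigma>\<^sup>2 / q"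
    using assms \<open>s\<^sup>2 \<le> \<sigma>\<^sup>2\<close> by (intro frac_le) auto
  moreover have "s * H \<le> \<sigma> * H'"
    using assms by (intro mult_mono) auto
  ultimately show ?thesis
    by (intro add_mono divide_right_mono) auto
qed

lemma collinear_pairs_shift:
  fixes dx dy :: int
  defines "shift \<equiv> \<lambda>p::pt. (fst p + dx, snd p + dy)"
  shows "collinear_pairs (shift ` A) (shift w) = image shift ` collinear_pairs A w"
proof -
  have coll: "coll (shift u) (shift v) (shift w) \<longleftrightarrow> coll u v w" for u v
    by (simp add: shift_def coll_def algebra_simps)
  have "inj shift"
    by (simp add: shift_def inj_on_def prod_eq_iff)
  show ?thesis
  proof
    show "collinear_pairs (shift ` A) (shift w) \<subseteq> image shift ` collinear_pairs A w"
    proof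
      fix B assume "B \<in> collinear_pairs (shift ` A) (shift w)"
      then obtain u v where "B = {shift u, shift v}" "u \<in> A" "v \<in> A" "u \<noteq> v"
        "coll (shift u) (shift v) (shift w)"
        unfolding collinear_pairs_def by blast
      then show "B \<in> image shift ` collinear_pairs A w"
        unfolding collinear_pairs_def coll
        by (intro image_eqI[of _ _ "{u, v}"]) (simp, blast)
    qed
    show "image shift ` collinear_pairs A w \<subseteq> collinear_pairs (shift ` A) (shift w)"
    proof
      fix B assume "B \<in> image shift ` collinear_pairs A w"
      then obtain P where "P \<in> collinear_pairs A w" "B = shift ` P"
        by blast
      then obtain u v where "B = {shift u, shift v}" "u \<in> A" "v \<in> A" "u \<noteq> v" "coll u v w"
        unfolding collinear_pairs_def by auto
      moreover have "shift u \<noteq> shift v"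
        using \<open>inj shift\<close> \<open>u \<noteq> v\<close> by (simp add: inj_eq)
      ultimately show "B \<in> collinear_pairs (shift ` A) (shift w)"
        unfolding collinear_pairs_def using coll by blast
    qed
  qed
qed

lemma card_collinear_pairs_box_shift:
  "card (collinear_pairs (box x0 y0 s) (wx, wy))
     = card (collinear_pairs (box (x0 - wx) (y0 - wy) s) (0, 0))"
proof -
  define shift where "shift = (\<lambda>p::pt. (fst p + wx, snd p + wy))"
  have box: "box x0 y0 s = shift ` box (x0 - wx) (y0 - wy) s"
  proof
    show "box x0 y0 s \<subseteq> shift ` box (x0 - wx) (y0 - wy) s"
    proof
      fix p assume "p \<in> box x0 y0 s"
      then show "p \<in> shift ` box (x0 - wx) (y0 - wy) s"
        by (intro image_eqI[of _ _ "(fst p - wx, snd p - wy)"]) (auto simp: box_def shift_def)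
    qed
  qed (auto simp: box_def shift_def)
  moreover have "(wx, wy) = shift (0, 0)"
    by (simp add: shift_def)
  ultimately have "collinear_pairs (box x0 y0 s) (wx, wy)
      = image shift ` collinear_pairs (box (x0 - wx) (y0 - wy) s) (0, 0)"
    unfolding shift_def by (simp only: collinear_pairs_shift)
  moreover have "inj_on (image shift) X" for X
    by (rule inj_on_image) (simp add: shift_def inj_on_def prod_eq_iff)
  ultimately show ?thesis
    by (simp add: card_image)
qed

section \<open>The squares and the constructed set\<close>

definition side_real :: "real \<Rightarrow> real \<Rightarrow> nat \<Rightarrow> real" where
  "side_real \<epsilon> c n = 2 ^ n / (c * real n powr (1 + \<epsilon>))"

lemma side_eq_floor: "side \<epsilon> c n = \<lfloor>side_real \<epsilon> c n\<rfloor>"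
  by (simp add: side_def side_real_def)

lemma side_real_nonneg: "c > 0 \<Longrightarrow> 0 \<le> side_real \<epsilon> c n"
  by (simp add: side_real_def)

lemma side_real_le:
  assumes "0 < \<epsilon>" "c \<ge> 12"
  shows "12 * side_real \<epsilon> c n \<le> 2 ^ n"
proof (cases "n = 0")
  case False
  then have "1 \<le> real n powr (1 + \<epsilon>)"
    using assms by (intro ge_one_powr_ge_zero) auto
  then have "12 \<le> c * real n powr (1 + \<epsilon>)"
    using mult_mono[of 12 c 1 "real n powr (1 + \<epsilon>)"] assms by simp
  then show ?thesis
    using assms by (simp add: side_real_def field_simps)
qed (simp add: side_real_def)

lemma side_le_Ytop:
  assumes "c \<ge> 12"
  shows "side \<epsilon> c n \<le> Ytop \<epsilon> n"
proof (cases "n = 0")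
  case False
  then have "real n powr \<epsilon> \<le> (c * real n) * real n powr \<epsilon>"
    using assms by (simp add: mult_le_cancel_right1 mult_ge1_I flip: of_nat_0_less_iff)
  also have "\<dots> = c * real n powr (1 + \<epsilon>)"
    using False by (simp add: powr_add)
  finally have "2 ^ n / (c * real n powr (1 + \<epsilon>)) \<le> 2 ^ n / real n powr \<epsilon>"
    using False assms by (intro divide_left_mono) auto
  then show ?thesis
    unfolding side_def Ytop_def by (rule floor_mono)
qed (simp add: side_def Ytop_def)

lemma harm_side_le:
  assumes "0 < \<epsilon>" "c \<ge> 12"
  shows "harm (nat (side \<epsilon> c n)) \<le> real n + 1"
proof (cases "side \<epsilon> c n \<ge> 1")
  case True
  have "real (nat (side \<epsilon> c n)) \<le> side_real \<epsilon> c n"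
    using True by (simp add: side_eq_floor)
  also have "\<dots> \<le> 2 ^ n"
    using side_real_le[OF assms, of n] side_real_nonneg[of c \<epsilon> n] assms by linarith
  finally have "ln (real (nat (side \<epsilon> c n))) \<le> ln (2 ^ n)"
    using True by simp
  also have "\<dots> = real n * ln 2"
    by (simp add: ln_realpow)
  also have "\<dots> \<le> real n"
    using ln_2_less_1 by (simp add: mult_left_le)
  finally show ?thesis
    using harm_le_one_plus_ln[of "nat (side \<epsilon> c n)"] True by linarith
next
  case False
  then have "nat (side \<epsilon> c n) = 0"
    by simp
  then show ?thesis
    by (simp add: harm_def)
qed

lemma Qsq_eq_box: "Qsq \<epsilon> c n = box (2 ^ n) (Ytop \<epsilon> n - side \<epsilon> c n) (side \<epsilon> c n)"
  by (auto simp: Qsq_def box_def)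

lemma finite_Qsq: "finite (Qsq \<epsilon> c n)"
  by (simp add: Qsq_eq_box finite_box)

text \<open>The squares are pairwise disjoint because \<open>Q\<^sub>n\<close> lies in the strip \<open>2\<^sup>n \<le> x < 2\<^sup>n\<^sup>+\<^sup>1\<close>.\<close>
lemma Qsq_disjoint:
  assumes "0 < \<epsilon>" "c \<ge> 12" "k < m"
  shows "Qsq \<epsilon> c k \<inter> Qsq \<epsilon> c m = {}"
proof -
  have "(0::real) < 2 ^ k"
    by simp
  then have "side_real \<epsilon> c k < 2 ^ k"
    using side_real_le[OF assms(1,2), of k] side_real_nonneg[of c \<epsilon> k] assms by linarith
  then have "side \<epsilon> c k < 2 ^ k"
    by (simp add: side_eq_floor floor_less_iff)
  then have "2 ^ k + side \<epsilon> c k < (2::int) ^ Suc k"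
    by simp
  also have "\<dots> \<le> 2 ^ m"
    using assms by (intro power_increasing) auto
  finally show ?thesis
    by (auto simp: Qsq_def)
qed

lemma pr_less_side:
  assumes "3 \<le> side \<epsilon> c m"
  shows "pr \<epsilon> c m < side \<epsilon> c m"
proof -
  let ?P = "\<lambda>p::int. prime p \<and> p < side \<epsilon> c m"
  have "finite {p. ?P p}"
    by (rule finite_subset[of _ "{0..side \<epsilon> c m}"]) (auto dest: prime_ge_0_int)
  moreover have "?P 2"
    using assms by simp
  ultimately have "Max {p. ?P p} \<in> {p. ?P p}"
    by (intro Max_in) blast+
  moreover have "pr \<epsilon> c m = Max {p. ?P p}"
    unfolding pr_def by (rule Greatest_Max[OF \<open>finite _\<close>]) (use \<open>?P 2\<close> in blast)
  ultimately show ?thesis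
    by simp
qed

lemma parab_subset_graph:
  "parab \<epsilon> c m a b
     \<subseteq> (\<lambda>x. (2 ^ m + x, Ytop \<epsilon> m - ((x - a)\<^sup>2 + b) mod pr \<epsilon> c m)) ` {0..<pr \<epsilon> c m}"
  by (auto simp: parab_def)

lemma card_parab_le:
  assumes "3 \<le> side \<epsilon> c m"
  shows "card (parab \<epsilon> c m a b) \<le> side \<epsilon> c m"
proof -
  have "card (parab \<epsilon> c m a b)
      \<le> card ((\<lambda>x. (2 ^ m + x, Ytop \<epsilon> m - ((x - a)\<^sup>2 + b) mod pr \<epsilon> c m)) ` {0..<pr \<epsilon> c m})"
    by (rule card_mono[OF _ parab_subset_graph]) simp
  also have "\<dots> \<le> card {0..<pr \<epsilon> c m}"
    by (rule card_image_le) simp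
  finally show ?thesis
    using pr_less_side[OF assms] assms by simp
qed

lemma card_constructed_slice_le:
  assumes "constructed \<epsilon> c n0 S" "n0 \<le> m" "3 \<le> side \<epsilon> c m"
  shows "real (card (S \<inter> Qsq \<epsilon> c m)) \<le> side_real \<epsilon> c m"
proof -
  obtain a b f where "S \<inter> Qsq \<epsilon> c m
      = parab \<epsilon> c m a b - f ` mixed_triples (parab \<epsilon> c m a b) (Sbefore \<epsilon> c S m)"
    using assms(1,2) unfolding constructed_def by meson
  then have "card (S \<inter> Qsq \<epsilon> c m) \<le> card (parab \<epsilon> c m a b)"
    by (simp add: card_mono finite_subset[OF parab_subset_graph])
  also have "int \<dots> \<le> side \<epsilon> c m"
    using card_parab_le[OF assms(3)] .
  finally show ?thesis
    by (simp add: side_eq_floor le_floor_iff)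
qed

lemma constructed_slice_empty:
  assumes "constructed \<epsilon> c n0 S" "0 < \<epsilon>" "c \<ge> 12" "m < n0"
  shows "S \<inter> Qsq \<epsilon> c m = {}"
proof -
  have "Qsq \<epsilon> c k \<inter> Qsq \<epsilon> c m = {}" if "n0 \<le> k" for k
    using Qsq_disjoint[OF assms(2,3), of m k] that assms(4) by (simp add: Int_commute)
  moreover have "S \<subseteq> (\<Union>k \<in> {n0..}. Qsq \<epsilon> c k)"
    using assms(1) by (simp add: constructed_def)
  ultimately show ?thesis
    by blast
qed

lemma Sbefore_eq:
  assumes "constructed \<epsilon> c n0 S" "0 < \<epsilon>" "c \<ge> 12"
  shows "Sbefore \<epsilon> c S n = (\<Union>m \<in> {n0..<n}. S \<inter> Qsq \<epsilon> c m)"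
proof
  show "Sbefore \<epsilon> c S n \<subseteq> (\<Union>m \<in> {n0..<n}. S \<inter> Qsq \<epsilon> c m)"
  proof
    fix x assume "x \<in> Sbefore \<epsilon> c S n"
    then obtain m where "m < n" "x \<in> S \<inter> Qsq \<epsilon> c m"
      by (auto simp: Sbefore_def)
    moreover from this have "n0 \<le> m"
      using constructed_slice_empty[OF assms, of m] by (cases "n0 \<le> m") auto
    ultimately show "x \<in> (\<Union>m \<in> {n0..<n}. S \<inter> Qsq \<epsilon> c m)"
      by auto
  qed
qed (auto simp: Sbefore_def)

lemma sum_le_twice_of_growth:
  fixes f :: "nat \<Rightarrow> real"
  assumes "0 \<le> f n0" "\<And>m. n0 \<le> m \<Longrightarrow> 3 * f m \<le> 2 * f (Suc m)" "n0 \<le> n"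
  shows "(\<Sum>m \<in> {n0..<n}. f m) \<le> 2 * f n"
  using assms(3)
proof (induction n rule: dec_induct)
  case (step n)
  then show ?case
    using assms(2)[of n] by simp
qed (use assms(1) in simp)

lemma card_Sbefore_le:
  assumes "constructed \<epsilon> c n0 S" "0 < \<epsilon>" "c \<ge> 12" "n0 \<le> n"
    and "\<And>m. n0 \<le> m \<Longrightarrow> 4 \<le> side_real \<epsilon> c m \<and> 3 * side_real \<epsilon> c m \<le> 2 * side_real \<epsilon> c (Suc m)"
  shows "real (card (Sbefore \<epsilon> c S n)) \<le> 2 * side_real \<epsilon> c n"
proof -
  have "card (Sbefore \<epsilon> c S n) \<le> (\<Sum>m \<in> {n0..<n}. card (S \<inter> Qsq \<epsilon> c m))"
    unfolding Sbefore_eq[OF assms(1-3)] by (rule card_UN_le) simp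
  then have "real (card (Sbefore \<epsilon> c S n)) \<le> (\<Sum>m \<in> {n0..<n}. real (card (S \<inter> Qsq \<epsilon> c m)))"
    by (simp flip: of_nat_sum)
  also have "\<dots> \<le> (\<Sum>m \<in> {n0..<n}. side_real \<epsilon> c m)"
  proof (intro sum_mono card_constructed_slice_le[OF assms(1)])
    fix m assume "m \<in> {n0..<n}"
    then show "n0 \<le> m" "3 \<le> side \<epsilon> c m"
      using assms(5)[of m] by (auto simp: side_eq_floor le_floor_iff)
  qed
  also have "\<dots> \<le> 2 * side_real \<epsilon> c n"
    using assms(4) assms(5)[of n0] by (intro sum_le_twice_of_growth) (auto dest: assms(5))
  finally show ?thesis .
qed

lemma blue_pairs_subset:
  "blue_pairs \<epsilon> c S n \<subseteq> (\<Union>w \<in> Sbefore \<epsilon> c S n. collinear_pairs (Qsq \<epsilon> c n) w)"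
proof
  fix B assume "B \<in> blue_pairs \<epsilon> c S n"
  then obtain u v m w where "B = {u, v}" "u \<in> Qsq \<epsilon> c n" "v \<in> Qsq \<epsilon> c n" "u \<noteq> v"
    and "m < n" "w \<in> S \<inter> Qsq \<epsilon> c m" "coll u v w"
    unfolding blue_pairs_def by blast
  then show "B \<in> (\<Union>w \<in> Sbefore \<epsilon> c S n. collinear_pairs (Qsq \<epsilon> c n) w)"
    unfolding Sbefore_def collinear_pairs_def by blast
qed

section \<open>Pairs collinear with a point of an earlier square\<close>

lemma pow2_div_powr_mono:
  assumes "0 < \<epsilon>" "\<epsilon> \<le> 1" "1 \<le> m" "m \<le> n"
  shows "2 ^ m / real m powr \<epsilon> \<le> 2 ^ n / real n powr \<epsilon>"
  using assms(4)
proof (induction n rule: dec_induct)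
  case (step n)
  have "real n powr \<epsilon> > 0"
    using step assms by simp
  have "real (Suc n) powr \<epsilon> \<le> (2 * real n) powr \<epsilon>"
    using step assms by (intro powr_mono2) auto
  also have "\<dots> = 2 powr \<epsilon> * real n powr \<epsilon>"
    by (simp add: powr_mult)
  also have "\<dots> \<le> 2 * real n powr \<epsilon>"
    using powr_mono[of \<epsilon> 1 2] assms \<open>real n powr \<epsilon> > 0\<close> by simp
  finally have "2 ^ n / real n powr \<epsilon> \<le> 2 ^ Suc n / real (Suc n) powr \<epsilon>"
    using \<open>real n powr \<epsilon> > 0\<close> by (simp add: field_simps)
  with step.IH show ?case
    by linarith
qed simp

lemma earlier_point_position:
  assumes "0 < \<epsilon>" "\<epsilon> \<le> 1" "c \<ge> 12" "1 \<le> m" "m < n" "(wx, wy) \<in> Qsq \<epsilon> c m"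
  shows "2 ^ n \<le> 4 * (2 ^ n - wx)" "0 \<le> wy" "wy \<le> 2 ^ n / 2 / (real n - 1) powr \<epsilon>"
proof -
  from assms(6) have wx: "wx \<le> 2 ^ m + side \<epsilon> c m"
    and wy: "Ytop \<epsilon> m - side \<epsilon> c m \<le> wy" "wy \<le> Ytop \<epsilon> m"
    by (auto simp: Qsq_def)
  have "real_of_int (side \<epsilon> c m) \<le> side_real \<epsilon> c m"
    by (simp add: side_eq_floor)
  then have "real_of_int (12 * side \<epsilon> c m) \<le> real_of_int (2 ^ m)"
    using side_real_le[OF assms(1,3), of m] by simp
  then have "12 * side \<epsilon> c m \<le> 2 ^ m"
    by (simp only: of_int_le_iff)
  moreover have "2 * (2::int) ^ m \<le> 2 ^ n"
    using power_increasing[of "Suc m" n "2::int"] assms(5) by simp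
  moreover have "(0::int) < 2 ^ m"
    by simp
  ultimately show "2 ^ n \<le> 4 * (2 ^ n - wx)"
    using wx by (smt (verit))
  show "0 \<le> wy"
    using wy side_le_Ytop[OF assms(3), of \<epsilon> m] by simp
  have "wy \<le> 2 ^ m / real m powr \<epsilon>"
    using wy(2) by (simp add: Ytop_def le_floor_iff)
  also have "\<dots> \<le> 2 ^ (n - 1) / real (n - 1) powr \<epsilon>"
    using assms by (intro pow2_div_powr_mono) auto
  also have "\<dots> = 2 ^ n / 2 / (real n - 1) powr \<epsilon>"
    using assms(5) by (cases n) auto
  finally show "wy \<le> 2 ^ n / 2 / (real n - 1) powr \<epsilon>" .
qed

lemma earlier_point_offsets:
  assumes "0 < \<epsilon>" "\<epsilon> < 1" "c \<ge> 12" "1 \<le> m" "m < n" "(wx, wy) \<in> Qsq \<epsilon> c m"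
    and gap: "side_real \<epsilon> c n + 1 < 2 ^ n / real n powr \<epsilon> / 4"
    and growth: "2 ^ n / 2 / (real n - 1) powr \<epsilon> \<le> 3 / 4 * (2 ^ n / real n powr \<epsilon>)"
  shows "2 ^ n / 4 \<le> real_of_int (2 ^ n - wx)"
    and "0 < Ytop \<epsilon> n - side \<epsilon> c n - wy"
    and "real_of_int (Ytop \<epsilon> n - wy) \<le> 2 ^ n / real n powr \<epsilon>"
proof -
  have "real_of_int (2 ^ n) \<le> real_of_int (4 * (2 ^ n - wx))"
    using earlier_point_position(1)[of \<epsilon> c m n wx wy] assms by (simp only: of_int_le_iff)
  then show "2 ^ n / 4 \<le> real_of_int (2 ^ n - wx)"
    by simp
  have wy: "0 \<le> real_of_int wy" "wy \<le> 3 / 4 * (2 ^ n / real n powr \<epsilon>)"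
    using earlier_point_position(2,3)[of \<epsilon> c m n wx wy] assms growth by auto
  have Y: "2 ^ n / real n powr \<epsilon> - 1 \<le> Ytop \<epsilon> n" "Ytop \<epsilon> n \<le> 2 ^ n / real n powr \<epsilon>"
    unfolding Ytop_def by linarith+
  have "real_of_int (side \<epsilon> c n) \<le> side_real \<epsilon> c n"
    by (simp add: side_eq_floor)
  then have "0 < real_of_int (Ytop \<epsilon> n - side \<epsilon> c n - wy)"
    using wy Y gap by simp
  then show "0 < Ytop \<epsilon> n - side \<epsilon> c n - wy"
    by simp
  show "real_of_int (Ytop \<epsilon> n - wy) \<le> 2 ^ n / real n powr \<epsilon>"
    using wy Y by simp
qed

definition slope_width :: "real \<Rightarrow> real \<Rightarrow> nat \<Rightarrow> real" where
  "slope_width \<epsilon> c n = 4 / (c * real n powr (1 + \<epsilon>)) * (1 + 4 / real n powr \<epsilon>)"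

text \<open>The bound of \<open>card_collinear_pairs_box_le\<close> for the square \<open>Q\<^sub>n\<close> seen from a point of an
  earlier square, with denominator cut-off \<open>k \<approx> n\<^bsup>(1+3\<epsilon>)/4\<^esup>\<close> and \<open>harm s\<^sub>n \<le> n + 1\<close>.\<close>
definition pair_bound :: "real \<Rightarrow> real \<Rightarrow> nat \<Rightarrow> real" where
  "pair_bound \<epsilon> c n =
     line_pairs (side_real \<epsilon> c n) (real n powr \<epsilon> / 4)
     + (slope_width \<epsilon> c n * (side_real \<epsilon> c n)\<^sup>2 * (real n + 2)
        + (side_real \<epsilon> c n)\<^sup>2 / real n powr ((1 + 3 * \<epsilon>) / 4)
        + side_real \<epsilon> c n * (real n + 1)) / 2"

lemma cutoff_slope_width_less_one:
  assumes "1 \<le> n" "0 < \<epsilon>" "0 < c"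
    and cutoff: "16 * (1 + 4 / real n powr \<epsilon>) / real n powr ((1 - \<epsilon>) / 2) < c"
  shows "(real_of_int \<lceil>real n powr ((1 + 3 * \<epsilon>) / 4)\<rceil>)\<^sup>2 * slope_width \<epsilon> c n < 1"
proof -
  define q where "q = real n powr ((1 + 3 * \<epsilon>) / 4)"
  have "1 \<le> q"
    using assms by (simp add: q_def ge_one_powr_ge_zero)
  have "(real_of_int \<lceil>q\<rceil>)\<^sup>2 * slope_width \<epsilon> c n \<le> (2 * q)\<^sup>2 * slope_width \<epsilon> c n"
  proof (intro mult_right_mono power_mono)
    show "real_of_int \<lceil>q\<rceil> \<le> 2 * q"
      using \<open>1 \<le> q\<close> of_int_ceiling_le_add_one[of q] by linarith
  qed (use \<open>1 \<le> q\<close> assms in \<open>auto simp: slope_width_def\<close>)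
  also have "\<dots> = 16 * (1 + 4 / real n powr \<epsilon>) / real n powr ((1 - \<epsilon>) / 2) / c"
  proof -
    have "1 + \<epsilon> = (1 + 3 * \<epsilon>) / 4 + (1 + 3 * \<epsilon>) / 4 + (1 - \<epsilon>) / 2"
      by (simp add: field_simps)
    then have "real n powr (1 + \<epsilon>) = q\<^sup>2 * real n powr ((1 - \<epsilon>) / 2)"
      unfolding q_def power2_eq_square by (simp only: flip: powr_add)
    then show ?thesis
      using \<open>1 \<le> q\<close> assms by (simp add: slope_width_def field_simps)
  qed
  also have "\<dots> < 1"
    using cutoff assms by (simp add: divide_less_eq mult.commute)
  finally show ?thesis
    by (simp add: q_def)
qed

lemma card_collinear_pairs_Qsq_le:
  assumes "0 < \<epsilon>" "\<epsilon> < 1" "c \<ge> 12" "1 \<le> m" "m < n" "w \<in> Qsq \<epsilon> c m"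
    and gap: "side_real \<epsilon> c n + 1 < 2 ^ n / real n powr \<epsilon> / 4"
    and growth: "2 ^ n / 2 / (real n - 1) powr \<epsilon> \<le> 3 / 4 * (2 ^ n / real n powr \<epsilon>)"
    and cutoff: "16 * (1 + 4 / real n powr \<epsilon>) / real n powr ((1 - \<epsilon>) / 2) < c"
  shows "real (card (collinear_pairs (Qsq \<epsilon> c n) w)) \<le> pair_bound \<epsilon> c n"
proof -
  obtain wx wy where w: "w = (wx, wy)"
    by fastforce
  define s \<sigma> T q where "s = side \<epsilon> c n" and "\<sigma> = side_real \<epsilon> c n"
    and "T = 2 ^ n / real n powr \<epsilon>" and "q = real n powr ((1 + 3 * \<epsilon>) / 4)"
  define x0 y0 where "x0 = 2 ^ n - wx" and "y0 = Ytop \<epsilon> n - s - wy"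
  have "1 \<le> n" "1 \<le> q"
    using assms by (simp_all add: q_def ge_one_powr_ge_zero)
  have s: "0 \<le> s" "real_of_int s \<le> \<sigma>"
    using assms side_real_nonneg[of c \<epsilon> n] by (simp_all add: s_def \<sigma>_def side_eq_floor)
  have x0: "2 ^ n / 4 \<le> real_of_int x0" and "0 < y0" and y0s: "real_of_int (y0 + s) \<le> T"
    using earlier_point_offsets[of \<epsilon> c m n wx wy] assms w
    by (simp_all add: x0_def y0_def s_def T_def)
  have "0 < x0"
    using x0 zero_less_power[of "2::real" n] by linarith
  have "(y0 + s) / x0 - y0 / (x0 + s) \<le> \<sigma> / (2 ^ n / 4) * (1 + T / (2 ^ n / 4))"
    using slope_range_le[of "2 ^ n / 4" x0 y0 s \<sigma> T] x0 y0s s \<open>0 < y0\<close> by simp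
  also have "\<dots> = slope_width \<epsilon> c n"
    using \<open>1 \<le> n\<close> assms by (simp add: slope_width_def \<sigma>_def side_real_def T_def field_simps)
  finally have slope: "(y0 + s) / x0 - y0 / (x0 + s) \<le> slope_width \<epsilon> c n" .
  have "real n powr \<epsilon> / 4 = (2 ^ n / 4) / T"
    using \<open>1 \<le> n\<close> by (simp add: T_def field_simps)
  also have "\<dots> \<le> x0 / (y0 + s)"
    using x0 y0s \<open>0 < y0\<close> \<open>0 < x0\<close> s by (intro frac_le) auto
  finally have "real n powr \<epsilon> / 4 \<le> x0 / (y0 + s)" .
  then have "real (card (collinear_pairs (box x0 y0 s) (0, 0)))
      \<le> line_pairs s (real n powr \<epsilon> / 4) + (slope_width \<epsilon> c n * s\<^sup>2 * (harm (nat s) + 1)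
         + s\<^sup>2 / \<lceil>q\<rceil> + s * harm (nat s)) / 2"
    using \<open>0 < x0\<close> \<open>0 < y0\<close> s \<open>1 \<le> q\<close> slope \<open>1 \<le> n\<close>
      cutoff_slope_width_less_one[OF \<open>1 \<le> n\<close> assms(1) _ cutoff, folded q_def] assms
    by (intro card_collinear_pairs_box_le) auto
  also have "\<dots> \<le> line_pairs \<sigma> (real n powr \<epsilon> / 4)
      + (slope_width \<epsilon> c n * \<sigma>\<^sup>2 * (real n + 1 + 1) + \<sigma>\<^sup>2 / q + \<sigma> * (real n + 1)) / 2"
    unfolding of_int_power
    using s \<open>1 \<le> q\<close> \<open>1 \<le> n\<close> harm_side_le[of \<epsilon> c n, folded s_def] harm_nonneg[of "nat s"] assms
    by (intro pair_estimate_mono) (auto simp: slope_width_def)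
  also have "\<dots> = pair_bound \<epsilon> c n"
    by (simp add: pair_bound_def \<sigma>_def q_def)
  finally show ?thesis
    using card_collinear_pairs_box_shift[of "2 ^ n" "Ytop \<epsilon> n - s" s wx wy]
    by (simp add: Qsq_eq_box w x0_def y0_def s_def)
qed

lemma card_blue_pairs_le:
  assumes "constructed \<epsilon> c n0 S" "0 < \<epsilon>" "c \<ge> 12" "1 \<le> n0" "n0 \<le> n" "0 \<le> B"
    and growth: "\<And>m. n0 \<le> m \<Longrightarrow> 4 \<le> side_real \<epsilon> c m \<and> 3 * side_real \<epsilon> c m \<le> 2 * side_real \<epsilon> c (Suc m)"
    and pairs: "\<And>m w. 1 \<le> m \<Longrightarrow> m < n \<Longrightarrow> w \<in> Qsq \<epsilon> c m
                  \<Longrightarrow> real (card (collinear_pairs (Qsq \<epsilon> c n) w)) \<le> B"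
  shows "real (card (blue_pairs \<epsilon> c S n)) \<le> 2 * side_real \<epsilon> c n * B"
proof -
  let ?W = "Sbefore \<epsilon> c S n"
  have "finite ?W"
    unfolding Sbefore_eq[OF assms(1-3)] by (simp add: finite_Qsq)
  have "card (blue_pairs \<epsilon> c S n) \<le> card (\<Union>w \<in> ?W. collinear_pairs (Qsq \<epsilon> c n) w)"
    using \<open>finite ?W\<close>
    by (intro card_mono blue_pairs_subset) (simp add: finite_collinear_pairs finite_Qsq)
  also have "\<dots> \<le> (\<Sum>w \<in> ?W. card (collinear_pairs (Qsq \<epsilon> c n) w))"
    using \<open>finite ?W\<close> by (rule card_UN_le)
  finally have "real (card (blue_pairs \<epsilon> c S n))
      \<le> (\<Sum>w \<in> ?W. real (card (collinear_pairs (Qsq \<epsilon> c n) w)))"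
    by (simp flip: of_nat_sum)
  also have "\<dots> \<le> real (card ?W) * B"
  proof (rule sum_bounded_above)
    fix w assume "w \<in> ?W"
    then obtain m where "n0 \<le> m" "m < n" "w \<in> Qsq \<epsilon> c m"
      unfolding Sbefore_eq[OF assms(1-3)] by auto
    moreover have "1 \<le> m"
      using assms(4) \<open>n0 \<le> m\<close> by simp
    ultimately show "real (card (collinear_pairs (Qsq \<epsilon> c n) w)) \<le> B"
      using pairs by simp
  qed
  also have "\<dots> \<le> 2 * side_real \<epsilon> c n * B"
    using card_Sbefore_le[OF assms(1-3,5) growth] assms(6) by (rule mult_right_mono)
  finally show ?thesis .
qed

section \<open>Asymptotics\<close>

lemma pair_bound_nonneg: "c > 0 \<Longrightarrow> 0 \<le> pair_bound \<epsilon> c n"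
  unfolding pair_bound_def slope_width_def
  by (intro add_nonneg_nonneg divide_nonneg_nonneg mult_nonneg_nonneg line_pairs_nonneg)
    (simp_all add: side_real_nonneg)

lemma eventually_card_collinear_pairs_le:
  assumes "0 < \<epsilon>" "\<epsilon> < 1" "c \<ge> 12"
  shows "eventually (\<lambda>n. \<forall>m \<in> {1..<n}. \<forall>w \<in> Qsq \<epsilon> c m.
           real (card (collinear_pairs (Qsq \<epsilon> c n) w)) \<le> pair_bound \<epsilon> c n) sequentially"
proof -
  have "eventually (\<lambda>n. side_real \<epsilon> c n + 1 < 2 ^ n / real n powr \<epsilon> / 4) sequentially"
    using assms unfolding side_real_def by real_asymp
  moreover have "eventually (\<lambda>n. 2 ^ n / 2 / (real n - 1) powr \<epsilon> \<le> 3 / 4 * (2 ^ n / real n powr \<epsilon>))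
      sequentially"
    using assms by real_asymp
  moreover have "eventually (\<lambda>n. 16 * (1 + 4 / real n powr \<epsilon>) / real n powr ((1 - \<epsilon>) / 2) < c)
      sequentially"
    using assms by real_asymp
  ultimately show ?thesis
    by eventually_elim (use card_collinear_pairs_Qsq_le[OF assms] in auto)
qed

lemma eventually_side_real_growth:
  assumes "0 < \<epsilon>" "c > 0"
  shows "eventually (\<lambda>m. 4 \<le> side_real \<epsilon> c m \<and> 3 * side_real \<epsilon> c m \<le> 2 * side_real \<epsilon> c (Suc m))
           sequentially"
proof (rule eventually_conj)
  show "eventually (\<lambda>m. 4 \<le> side_real \<epsilon> c m) sequentially"
    using assms unfolding side_real_def by real_asymp
  show "eventually (\<lambda>m. 3 * side_real \<epsilon> c m \<le> 2 * side_real \<epsilon> c (Suc m)) sequentially"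
    using assms unfolding side_real_def by real_asymp
qed

lemma eventually_blue_bound:
  assumes "0 < \<epsilon>" "\<epsilon> < 1" "c > 0"
  shows "eventually (\<lambda>n. 2 * side_real \<epsilon> c n * pair_bound \<epsilon> c n
           \<le> 8 * 2 ^ (3 * n) / (c ^ 4 * real n powr (3 + 4 * \<epsilon>))) sequentially"
proof -
  let ?ratio = "\<lambda>n. 2 * side_real \<epsilon> c n * pair_bound \<epsilon> c n
                    / (8 * 2 ^ (3 * n) / (c ^ 4 * real n powr (3 + 4 * \<epsilon>)))"
  have "(?ratio \<longlongrightarrow> 1 / 2) sequentially"
    using assms unfolding pair_bound_def slope_width_def line_pairs_def side_real_def
    by real_asymp (simp add: field_simps eval_nat_numeral)
  then have "eventually (\<lambda>n. ?ratio n < 1) sequentially"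
    by (rule order_tendstoD) simp
  moreover have "eventually (\<lambda>n. 0 < 8 * 2 ^ (3 * n) / (c ^ 4 * real n powr (3 + 4 * \<epsilon>)))
      sequentially"
    using assms by real_asymp
  ultimately show ?thesis
    by eventually_elim (metis divide_less_eq_1_pos less_imp_le)
qed

lemma eventually_card_blue_pairs_le:
  assumes "0 < \<epsilon>" "\<epsilon> < 1" "c \<ge> 12" "constructed \<epsilon> c n0 S" "1 \<le> n0"
    and growth: "\<And>m. n0 \<le> m
      \<Longrightarrow> 4 \<le> side_real \<epsilon> c m \<and> 3 * side_real \<epsilon> c m \<le> 2 * side_real \<epsilon> c (Suc m)"
  shows "eventually (\<lambda>n. real (card (blue_pairs \<epsilon> c S n))
           \<le> 8 * 2 ^ (3 * n) / (c ^ 4 * real n powr (3 + 4 * \<epsilon>))) sequentially"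
proof -
  have "c > 0"
    using assms by simp
  from eventually_card_collinear_pairs_le[OF assms(1-3)] eventually_blue_bound[OF assms(1,2) this]
    eventually_ge_at_top[of n0]
  show ?thesis
  proof eventually_elim
    case (elim n)
    have "real (card (blue_pairs \<epsilon> c S n)) \<le> 2 * side_real \<epsilon> c n * pair_bound \<epsilon> c n"
    proof (rule card_blue_pairs_le[OF assms(4,1,3,5) elim(3)])
      show "0 \<le> pair_bound \<epsilon> c n"
        using \<open>c > 0\<close> by (rule pair_bound_nonneg)
    qed (use elim(1) growth in auto)
    with elim(2) show ?case
      by linarith
  qed
qed

theorem lemma3p8:
  fixes \<epsilon> c :: real
  assumes "0 < \<epsilon>" "\<epsilon> < 1" "c \<ge> 12 / \<epsilon>"
  shows "\<exists>N0. \<forall>n0\<ge>N0. \<forall>S. constructed \<epsilon> c n0 S \<longrightarrow>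
           (\<exists>N. \<forall>n\<ge>N. real (card (blue_pairs \<epsilon> c S n))
                 \<le> 8 * 2 ^ (3 * n) / (c ^ 4 * real n powr (3 + 4 * \<epsilon>)))"
proof -
  have "12 \<le> 12 / \<epsilon>"
    using assms by (simp add: le_divide_eq)
  then have c: "c \<ge> 12"
    using assms by linarith
  obtain N0 where "1 \<le> N0" and growth: "\<And>m. N0 \<le> m
      \<Longrightarrow> 4 \<le> side_real \<epsilon> c m \<and> 3 * side_real \<epsilon> c m \<le> 2 * side_real \<epsilon> c (Suc m)"
    using eventually_conj[OF eventually_ge_at_top[of 1] eventually_side_real_growth[OF assms(1), of c]] c
    unfolding eventually_sequentially by auto
  have "\<exists>N. \<forall>n\<ge>N. real (card (blue_pairs \<epsilon> c S n))
          \<le> 8 * 2 ^ (3 * n) / (c ^ 4 * real n powr (3 + 4 * \<epsilon>))"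
    if "N0 \<le> n0" "constructed \<epsilon> c n0 S" for n0 S
    using eventually_card_blue_pairs_le[OF assms(1,2) c that(2)] that(1) \<open>1 \<le> N0\<close> growth
    unfolding eventually_sequentially by simp
  then show ?thesis
    by blast
qed

end
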